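(* Let $\ell\in\mathbb{N}$, let $G$ be an $\ell$-tuple regular finite group and let $N$ be a subgroup of $G$ that is a union of order classes. Then $N$ is $\ell$-tuple regular.
   Context: A subgroup $N$ of $G$ is a union of order classes if for every $n\in\mathbb{N}$ it contains either all or none of the elements of order $n$ of $G$. For $\ell\in\mathbb{N}$, a finite group $G$ is $\ell$-tuple regular if for all tuples $(g_1,\ldots,g_\ell),(h_1,\ldots,h_\ell)\in G^\ell$ (entries may repeat) for which $g_i\mapsto h_i$ defines an isomorphism $\langle g_1,\ldots,g_\ell\rangle\to\langle h_1,\ldots,h_\ell\rangle$, there exists a bijection $\Psi\colon G\to G$ such that for every $g\in G$ the assignment $g_1\mapsto h_1,\ldots,g_\ell\mapsto h_\ell,g\mapsto\Psi(g)$ defines an isomorphism $\langle g_1,\ldots,g_\ell,g\rangle\to\langle h_1,\ldots,h_\ell,\Psi(g)\rangle$. *)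

theory Defs
  imports "HOL-Algebra.Algebra"
begin

definition union_of_order_classes :: "('a, 'b) monoid_scheme \<Rightarrow> 'a set \<Rightarrow> bool" where
  "union_of_order_classes G N \<longleftrightarrow>
     (\<forall>n::nat. (\<forall>x\<in>carrier G. group.ord G x = n \<longrightarrow> x \<in> N) \<or>
               (\<forall>x\<in>carrier G. group.ord G x = n \<longrightarrow> x \<notin> N))"

definition tuple_regular :: "nat \<Rightarrow> ('a, 'b) monoid_scheme \<Rightarrow> bool" where
  "tuple_regular l G \<longleftrightarrow>
     (\<forall>g h :: nat \<Rightarrow> 'a.
        (\<forall>i<l. g i \<in> carrier G) \<and> (\<forall>i<l. h i \<in> carrier G) \<and>
        (\<exists>\<phi>. \<phi> \<in> iso (G\<lparr>carrier := generate G (g ` {..<l})\<rparr>)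
                       (G\<lparr>carrier := generate G (h ` {..<l})\<rparr>) \<and>
              (\<forall>i<l. \<phi> (g i) = h i))
        \<longrightarrow>
        (\<exists>\<Psi>. bij_betw \<Psi> (carrier G) (carrier G) \<and>
           (\<forall>x\<in>carrier G. \<exists>\<phi>.
              \<phi> \<in> iso (G\<lparr>carrier := generate G (insert x (g ` {..<l}))\<rparr>)
                       (G\<lparr>carrier := generate G (insert (\<Psi> x) (h ` {..<l}))\<rparr>) \<and>
              (\<forall>i<l. \<phi> (g i) = h i) \<and> \<phi> x = \<Psi> x)))"

end

theory Submission
  imports Defs
begin

text \<open>
  Subgroups generated inside N coincide with those generated inside G, so a pair of tuples
  in N with an isomorphism g i \<mapsto> h i is such a pair for G as well. Tuple regularity of G
  gives a bijection \<Psi> of G such that each g, x \<mapsto> h, \<Psi> x extends to an isomorphism; hence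
  \<Psi> preserves element orders, so it maps the union of order classes N into itself, and being
  injective on the finite set N it restricts to a bijection of N.
\<close>

lemma (in group_hom) ord_hom_inj:
  assumes "inj_on h (carrier G)" and "x \<in> carrier G"
  shows "group.ord H (h x) = group.ord G x"
proof -
  have "x [^] n = \<one> \<longleftrightarrow> h x [^]\<^bsub>H\<^esub> n = \<one>\<^bsub>H\<^esub>" for n :: nat
    using assms inj_on_eq_iff[OF assms(1)] by (metis G.nat_pow_closed G.one_closed hom_nat_pow hom_one)
  then show ?thesis
    using assms(2) G.ord_unique H.ord_unique by (metis G.pow_eq_id hom_closed)
qed

lemma (in subgroup) ord_subgroup:
  assumes "group G" and "x \<in> H"
  shows "group.ord (G\<lparr>carrier := H\<rparr>) x = group.ord G x"
proof -
  interpret G: group G by fact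
  interpret H: group "G\<lparr>carrier := H\<rparr>" by (rule subgroup_is_group[OF assms(1)])
  have "x [^]\<^bsub>G\<lparr>carrier := H\<rparr>\<^esub> n = x [^]\<^bsub>G\<^esub> n" for n :: nat
    by (simp add: nat_pow_def)
  then show ?thesis
    using assms(2) subset H.ord_unique G.pow_eq_id by auto
qed

lemma iso_subgroups_ord_eq:
  assumes "group G" and "subgroup A G" and "subgroup B G"
    and "\<phi> \<in> iso (G\<lparr>carrier := A\<rparr>) (G\<lparr>carrier := B\<rparr>)" and "x \<in> A"
  shows "group.ord G (\<phi> x) = group.ord G x"
proof -
  have hom: "group_hom (G\<lparr>carrier := A\<rparr>) (G\<lparr>carrier := B\<rparr>) \<phi>"
    using assms by (simp add: group_hom_def group_hom_axioms_def iso_def subgroup.subgroup_is_group)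
  have "\<phi> x \<in> B"
    using assms(4,5) by (auto simp: iso_def bij_betw_def)
  have "group.ord G (\<phi> x) = group.ord (G\<lparr>carrier := B\<rparr>) (\<phi> x)"
    using subgroup.ord_subgroup[OF assms(3,1) \<open>\<phi> x \<in> B\<close>] by simp
  also have "\<dots> = group.ord (G\<lparr>carrier := A\<rparr>) x"
    using group_hom.ord_hom_inj[OF hom] assms(4,5) by (simp add: iso_def bij_betw_def)
  also have "\<dots> = group.ord G x"
    using subgroup.ord_subgroup[OF assms(2,1,5)] .
  finally show ?thesis .
qed

definition tuple_iso :: "('a, 'b) monoid_scheme \<Rightarrow> nat \<Rightarrow> (nat \<Rightarrow> 'a) \<Rightarrow> (nat \<Rightarrow> 'a) \<Rightarrow> bool" where
  "tuple_iso G l g h \<longleftrightarrow>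
     (\<exists>\<phi>. \<phi> \<in> iso (G\<lparr>carrier := generate G (g ` {..<l})\<rparr>) (G\<lparr>carrier := generate G (h ` {..<l})\<rparr>) \<and>
          (\<forall>i<l. \<phi> (g i) = h i))"

lemma image_fun_upd_lessThan_Suc: "(g(l := x)) ` {..<Suc l} = insert x (g ` {..<l})"
  by (auto simp: lessThan_Suc)

lemma all_less_Suc_fun_upd:
  "(\<forall>i<Suc l. \<phi> ((g(l := x)) i) = (h(l := y)) i) \<longleftrightarrow> (\<forall>i<l. \<phi> (g i) = h i) \<and> \<phi> x = y"
  by (auto simp: less_Suc_eq)

lemma tuple_regular_iff_tuple_iso:
  "tuple_regular l G \<longleftrightarrow>
     (\<forall>g h. (\<forall>i<l. g i \<in> carrier G) \<and> (\<forall>i<l. h i \<in> carrier G) \<and> tuple_iso G l g h \<longrightarrow>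
        (\<exists>\<Psi>. bij_betw \<Psi> (carrier G) (carrier G) \<and>
           (\<forall>x\<in>carrier G. tuple_iso G (Suc l) (g(l := x)) (h(l := \<Psi> x)))))"
  unfolding tuple_regular_def tuple_iso_def image_fun_upd_lessThan_Suc all_less_Suc_fun_upd
  by (simp only: conj_assoc)

lemma tuple_regularD:
  assumes "tuple_regular l G" and "\<forall>i<l. g i \<in> carrier G" and "\<forall>i<l. h i \<in> carrier G"
    and "tuple_iso G l g h"
  obtains \<Psi> where "bij_betw \<Psi> (carrier G) (carrier G)"
    and "\<And>x. x \<in> carrier G \<Longrightarrow> tuple_iso G (Suc l) (g(l := x)) (h(l := \<Psi> x))"
  using assms(1)[unfolded tuple_regular_iff_tuple_iso, rule_format, OF conjI[OF assms(2) conjI[OF assms(3,4)]]]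
    that by blast

lemma tuple_iso_subgroup_iff:
  assumes "group G" and "subgroup N G" and "g ` {..<l} \<subseteq> N" and "h ` {..<l} \<subseteq> N"
  shows "tuple_iso (G\<lparr>carrier := N\<rparr>) l g h \<longleftrightarrow> tuple_iso G l g h"
  using assms by (simp add: tuple_iso_def group.generate_consistent)

lemma tuple_regular_subgroupI:
  assumes "group G" and "subgroup N G"
    and "\<And>g h. g ` {..<l} \<subseteq> N \<Longrightarrow> h ` {..<l} \<subseteq> N \<Longrightarrow> tuple_iso G l g h \<Longrightarrow>
      \<exists>\<Psi>. bij_betw \<Psi> N N \<and> (\<forall>x\<in>N. tuple_iso G (Suc l) (g(l := x)) (h(l := \<Psi> x)))"
  shows "tuple_regular l (G\<lparr>carrier := N\<rparr>)"
  unfolding tuple_regular_iff_tuple_iso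
proof (intro allI impI)
  fix g h :: "nat \<Rightarrow> 'a"
  assume "(\<forall>i<l. g i \<in> carrier (G\<lparr>carrier := N\<rparr>)) \<and> (\<forall>i<l. h i \<in> carrier (G\<lparr>carrier := N\<rparr>)) \<and>
    tuple_iso (G\<lparr>carrier := N\<rparr>) l g h"
  then have gN: "g ` {..<l} \<subseteq> N" and hN: "h ` {..<l} \<subseteq> N"
    and "tuple_iso (G\<lparr>carrier := N\<rparr>) l g h"
    by auto
  then obtain \<Psi> where "bij_betw \<Psi> N N"
    and ext: "\<forall>x\<in>N. tuple_iso G (Suc l) (g(l := x)) (h(l := \<Psi> x))"
    using assms(3) tuple_iso_subgroup_iff[OF assms(1,2)] by meson
  moreover have "tuple_iso (G\<lparr>carrier := N\<rparr>) (Suc l) (g(l := x)) (h(l := \<Psi> x))" if "x \<in> N" for x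
  proof -
    have "(g(l := x)) ` {..<Suc l} \<subseteq> N" "(h(l := \<Psi> x)) ` {..<Suc l} \<subseteq> N"
      unfolding image_fun_upd_lessThan_Suc using gN hN that \<open>bij_betw \<Psi> N N\<close> bij_betw_apply by auto
    with tuple_iso_subgroup_iff[OF assms(1,2)] show ?thesis
      using ext that by blast
  qed
  ultimately show "\<exists>\<Psi>. bij_betw \<Psi> (carrier (G\<lparr>carrier := N\<rparr>)) (carrier (G\<lparr>carrier := N\<rparr>)) \<and>
    (\<forall>x\<in>carrier (G\<lparr>carrier := N\<rparr>). tuple_iso (G\<lparr>carrier := N\<rparr>) (Suc l) (g(l := x)) (h(l := \<Psi> x)))"
    by auto
qed

lemma tuple_iso_ord_eq:
  assumes "group G" and "g ` {..<l} \<subseteq> carrier G" and "h ` {..<l} \<subseteq> carrier G"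
    and "tuple_iso G l g h" and "i < l"
  shows "group.ord G (h i) = group.ord G (g i)"
proof -
  obtain \<phi> where
    \<phi>: "\<phi> \<in> iso (G\<lparr>carrier := generate G (g ` {..<l})\<rparr>) (G\<lparr>carrier := generate G (h ` {..<l})\<rparr>)"
    and "\<phi> (g i) = h i"
    using assms(4,5) tuple_iso_def by blast
  moreover have "g i \<in> generate G (g ` {..<l})"
    using assms(5) by (auto intro: generate.incl)
  ultimately show ?thesis
    using iso_subgroups_ord_eq[OF assms(1) _ _ \<phi>] group.generate_is_subgroup assms(1-3) by metis
qed

lemma tuple_iso_extension_ord_eq:
  assumes "group G" and "g ` {..<l} \<subseteq> carrier G" and "h ` {..<l} \<subseteq> carrier G"
    and "x \<in> carrier G" and "y \<in> carrier G" and "tuple_iso G (Suc l) (g(l := x)) (h(l := y))"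
  shows "group.ord G y = group.ord G x"
proof -
  have "(g(l := x)) ` {..<Suc l} \<subseteq> carrier G" "(h(l := y)) ` {..<Suc l} \<subseteq> carrier G"
    unfolding image_fun_upd_lessThan_Suc using assms(2-5) by auto
  from tuple_iso_ord_eq[OF assms(1) this assms(6), of l] show ?thesis
    by simp
qed

lemma bij_betw_restrict_finite:
  assumes "inj_on f A" and "B \<subseteq> A" and "finite B" and "f ` B \<subseteq> B"
  shows "bij_betw f B B"
  using assms endo_inj_surj inj_on_subset by (metis bij_betw_def)

lemma union_of_order_classesD:
  assumes "union_of_order_classes G N" and "x \<in> N" and "x \<in> carrier G" and "y \<in> carrier G"
    and "group.ord G y = group.ord G x"
  shows "y \<in> N"
  using assms unfolding union_of_order_classes_def by metis

theorem lemma3p2: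
  fixes G :: "('a, 'b) monoid_scheme" and N :: "'a set" and l :: nat
  assumes "group G" and "finite (carrier G)" and "tuple_regular l G"
    and "subgroup N G" and "union_of_order_classes G N"
  shows "tuple_regular l (G\<lparr>carrier := N\<rparr>)"
proof (rule tuple_regular_subgroupI[OF assms(1,4)])
  fix g h :: "nat \<Rightarrow> 'a"
  assume gN: "g ` {..<l} \<subseteq> N" and hN: "h ` {..<l} \<subseteq> N" and "tuple_iso G l g h"
  have NG: "N \<subseteq> carrier G"
    using assms(4) subgroup.subset by blast
  obtain \<Psi> where \<Psi>: "bij_betw \<Psi> (carrier G) (carrier G)"
    and ext: "\<And>x. x \<in> carrier G \<Longrightarrow> tuple_iso G (Suc l) (g(l := x)) (h(l := \<Psi> x))"
    using tuple_regularD[OF assms(3) _ _ \<open>tuple_iso G l g h\<close>] gN hN NG by blast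
  have \<Psi>N: "\<Psi> x \<in> N" if "x \<in> N" for x
  proof -
    have x: "x \<in> carrier G"
      using that NG by blast
    have \<Psi>x: "\<Psi> x \<in> carrier G"
      using bij_betw_apply[OF \<Psi> x] .
    show ?thesis
      using tuple_iso_extension_ord_eq[OF assms(1) _ _ x \<Psi>x ext[OF x]] gN hN NG
        union_of_order_classesD[OF assms(5) that x \<Psi>x]
      by blast
  qed
  have "bij_betw \<Psi> N N"
    using bij_betw_restrict_finite[OF bij_betw_imp_inj_on[OF \<Psi>] NG] finite_subset[OF NG assms(2)] \<Psi>N
    by blast
  then show "\<exists>\<Psi>. bij_betw \<Psi> N N \<and> (\<forall>x\<in>N. tuple_iso G (Suc l) (g(l := x)) (h(l := \<Psi> x)))"
    using ext NG by blast
qed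

end
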